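(* Let $(M,g)$ be a four-dimensional globally hyperbolic analytic spacetime with metric of signature $(+,-,-,-)$, identified via an isometry-compatible diffeomorphism with $\mathbb{R}\times\Sigma$ so that $g=\beta\,dt^2-g_t$, where $\beta>0$ and each $g_t$ is a Riemannian metric on $\Sigma$. For $\varepsilon>0$ let $$g^\varepsilon \doteq (1-i\varepsilon)\,\beta\,dt^2-g_t,\qquad g^R\doteq \beta\,dt^2+g_t .$$ Then for every geodesically convex region $\Omega\subset M$, every $x\in\Omega$ and every $\xi\in T_x\Omega$, $$\hat C(\varepsilon)\,g^R_x(\xi,\xi)\;\le\;|g^\varepsilon_x(\xi,\xi)|\;\le\;\check C(\varepsilon)\,g^R_x(\xi,\xi),$$ where $$\hat C(\varepsilon)=\Big(\tfrac{1}{\varepsilon}+\sqrt{1+\tfrac{1}{\varepsilon^2}}\Big)^{-1},\qquad \check C(\varepsilon)=\sqrt{1+\varepsilon^2}.$$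
   Context: $g^\varepsilon$ is the analytic continuation of the metric $g$ obtained by multiplying the time-time component by $(1-i\varepsilon)$; $g^R$ is the associated Riemannian metric. For $\xi\in T_x M$ one writes $\xi_0=dt(\xi)$, so $g^\varepsilon_x(\xi,\xi)=(1-i\varepsilon)\beta\xi_0^2-g_t(\xi,\xi)$. *)

theory Defs
  imports "HOL-Analysis.Analysis"
begin

text \<open>A tangent vector at a point of M = R x Sigma (dim Sigma = 3) is modelled as a pair
  (xi0, v) with xi0 = dt(xi) and v the spatial (Sigma-) component.\<close>

definition riem_inner :: "('v::real_vector \<Rightarrow> 'v \<Rightarrow> real) \<Rightarrow> bool" where
  "riem_inner G \<longleftrightarrow> bilinear G \<and> (\<forall>u v. G u v = G v u) \<and> (\<forall>v. v \<noteq> 0 \<longrightarrow> G v v > 0)"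

definition g_eps :: "real \<Rightarrow> real \<Rightarrow> (real^3 \<Rightarrow> real^3 \<Rightarrow> real) \<Rightarrow> real \<times> (real^3) \<Rightarrow> complex" where
  "g_eps \<epsilon> \<beta> G \<xi> = (1 - \<i> * complex_of_real \<epsilon>) * complex_of_real (\<beta> * (fst \<xi>)^2)
      - complex_of_real (G (snd \<xi>) (snd \<xi>))"

definition g_R :: "real \<Rightarrow> (real^3 \<Rightarrow> real^3 \<Rightarrow> real) \<Rightarrow> real \<times> (real^3) \<Rightarrow> real" where
  "g_R \<beta> G \<xi> = \<beta> * (fst \<xi>)^2 + G (snd \<xi>) (snd \<xi>)"

definition C_hat :: "real \<Rightarrow> real" where
  "C_hat \<epsilon> = inverse (1 / \<epsilon> + sqrt (1 + 1 / \<epsilon>^2))"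

definition C_check :: "real \<Rightarrow> real" where
  "C_check \<epsilon> = sqrt (1 + \<epsilon>^2)"

end

theory Submission
  imports Defs
begin

text \<open>With \<open>a = \<beta> \<xi>\<^sub>0\<^sup>2 \<ge> 0\<close> and \<open>b = g\<^sub>t(\<xi>,\<xi>) \<ge> 0\<close> one has \<open>g\<^sup>R(\<xi>,\<xi>) = a + b\<close> and
  \<open>|g\<^sup>\<epsilon>(\<xi>,\<xi>)|\<^sup>2 = (a - b)\<^sup>2 + \<epsilon>\<^sup>2 a\<^sup>2\<close>, so both bounds are inequalities between two quadratic
  forms on the quadrant \<open>a, b \<ge> 0\<close>. The upper bound is termwise. For the lower bound,
  \<open>\<epsilon>\<^sup>2 (a + b)\<^sup>2 \<le> (4 + \<epsilon>\<^sup>2) ((a - b)\<^sup>2 + \<epsilon>\<^sup>2 a\<^sup>2)\<close> holds on all of \<open>\<real>\<^sup>2\<close>, and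
  \<open>\<epsilon>\<^sup>2 / (4 + \<epsilon>\<^sup>2) \<ge> C_hat \<epsilon>\<^sup>2\<close> because \<open>C_hat \<epsilon> = \<epsilon> / (1 + \<surd>(1 + \<epsilon>\<^sup>2))\<close>.\<close>

lemma riem_inner_nonneg:
  assumes "riem_inner G"
  shows "G v v \<ge> 0"
proof (cases "v = 0")
  case True
  from assms have "linear (G 0)" unfolding riem_inner_def bilinear_def by blast
  then show ?thesis using True by (simp add: linear_0)
next
  case False
  with assms show ?thesis unfolding riem_inner_def by (simp add: less_imp_le)
qed

lemma cmod_damped_difference:
  fixes e a b :: real
  shows "cmod ((1 - \<i> * complex_of_real e) * complex_of_real a - complex_of_real b)
           = sqrt ((a - b)\<^sup>2 + (e * a)\<^sup>2)"
  by (simp add: cmod_def power2_eq_square algebra_simps)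

lemma C_hat_eq:
  assumes "e > 0"
  shows "C_hat e = e / (1 + sqrt (1 + e\<^sup>2))"
proof -
  have "1 + 1 / e\<^sup>2 = (1 + e\<^sup>2) / e\<^sup>2"
    using assms by (simp add: field_simps)
  then have "sqrt (1 + 1 / e\<^sup>2) = sqrt (1 + e\<^sup>2) / e"
    using assms by (simp add: real_sqrt_divide)
  then have "1 / e + sqrt (1 + 1 / e\<^sup>2) = (1 + sqrt (1 + e\<^sup>2)) / e"
    by (simp add: add_divide_distrib)
  then show ?thesis
    unfolding C_hat_def by simp
qed

lemma C_hat_square_le:
  assumes "e > 0"
  shows "(C_hat e)\<^sup>2 \<le> e\<^sup>2 / (4 + e\<^sup>2)"
proof -
  define s where "s = sqrt (1 + e\<^sup>2)"
  have "s \<ge> 1" and s_square: "s\<^sup>2 = 1 + e\<^sup>2"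
    unfolding s_def by (simp_all add: add_pos_nonneg)
  have "(C_hat e)\<^sup>2 = e\<^sup>2 / (2 + e\<^sup>2 + 2 * s)"
    using C_hat_eq[OF assms] s_square \<open>s \<ge> 1\<close>
    by (simp add: s_def power_divide power2_eq_square algebra_simps)
  also have "\<dots> \<le> e\<^sup>2 / (4 + e\<^sup>2)"
    using \<open>s \<ge> 1\<close> by (intro divide_left_mono) (auto simp: add_pos_nonneg)
  finally show ?thesis .
qed

lemma damped_difference_lower_bound:
  fixes e a b :: real
  assumes "e > 0" "a \<ge> 0" "b \<ge> 0"
  shows "C_hat e * (a + b) \<le> sqrt ((a - b)\<^sup>2 + (e * a)\<^sup>2)"
proof -
  have identity: "e\<^sup>2 * (a + b)\<^sup>2 + ((2 + e\<^sup>2) * a - 2 * b)\<^sup>2 = (4 + e\<^sup>2) * ((a - b)\<^sup>2 + (e * a)\<^sup>2)"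
    by (simp add: power2_eq_square algebra_simps)
  have "(4::real) + e\<^sup>2 > 0"
    by (simp add: add_pos_nonneg)
  then have quadratic_bound: "e\<^sup>2 / (4 + e\<^sup>2) * (a + b)\<^sup>2 \<le> (a - b)\<^sup>2 + (e * a)\<^sup>2"
    using identity by (simp add: field_simps) (metis le_add_same_cancel1 zero_le_power2)
  have "(C_hat e * (a + b))\<^sup>2 = (C_hat e)\<^sup>2 * (a + b)\<^sup>2"
    by (simp add: power_mult_distrib)
  also have "\<dots> \<le> e\<^sup>2 / (4 + e\<^sup>2) * (a + b)\<^sup>2"
    using C_hat_square_le[OF assms(1)] by (intro mult_right_mono) auto
  finally have "(C_hat e * (a + b))\<^sup>2 \<le> (a - b)\<^sup>2 + (e * a)\<^sup>2"
    using quadratic_bound by linarith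
  moreover have "C_hat e \<ge> 0"
    using C_hat_eq[OF assms(1)] assms(1) by simp
  ultimately show ?thesis
    using assms by (simp add: real_le_rsqrt)
qed

lemma damped_difference_upper_bound:
  fixes e a b :: real
  assumes "a \<ge> 0" "b \<ge> 0"
  shows "sqrt ((a - b)\<^sup>2 + (e * a)\<^sup>2) \<le> C_check e * (a + b)"
proof -
  have "(a - b)\<^sup>2 \<le> (a + b)\<^sup>2"
    using assms by (simp add: power2_eq_square algebra_simps)
  moreover have "(e * a)\<^sup>2 \<le> e\<^sup>2 * (a + b)\<^sup>2"
    using assms by (simp add: power_mult_distrib mult_left_mono power_mono)
  ultimately have "sqrt ((a - b)\<^sup>2 + (e * a)\<^sup>2) \<le> sqrt ((1 + e\<^sup>2) * (a + b)\<^sup>2)"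
    by (simp add: algebra_simps)
  also have "\<dots> = C_check e * (a + b)"
    using assms by (simp add: C_check_def real_sqrt_mult)
  finally show ?thesis .
qed

theorem lemma1:
  fixes \<epsilon> :: real
    and \<beta> :: "'p \<Rightarrow> real"
    and g :: "'p \<Rightarrow> real^3 \<Rightarrow> real^3 \<Rightarrow> real"
    and \<Omega> :: "'p set"
  assumes "\<epsilon> > 0"
    and "\<forall>x. \<beta> x > 0"
    and "\<forall>x. riem_inner (g x)"
  shows "\<forall>x\<in>\<Omega>. \<forall>\<xi> :: real \<times> (real^3).
           C_hat \<epsilon> * g_R (\<beta> x) (g x) \<xi> \<le> cmod (g_eps \<epsilon> (\<beta> x) (g x) \<xi>)
         \<and> cmod (g_eps \<epsilon> (\<beta> x) (g x) \<xi>) \<le> C_check \<epsilon> * g_R (\<beta> x) (g x) \<xi>"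
proof (intro ballI allI)
  fix x and \<xi> :: "real \<times> (real^3)"
  define a where "a = \<beta> x * (fst \<xi>)\<^sup>2"
  define b where "b = g x (snd \<xi>) (snd \<xi>)"
  have "a \<ge> 0"
    using assms(2) unfolding a_def by (simp add: less_imp_le)
  have "b \<ge> 0"
    using assms(3) riem_inner_nonneg unfolding b_def by blast
  have "g_R (\<beta> x) (g x) \<xi> = a + b"
    and "cmod (g_eps \<epsilon> (\<beta> x) (g x) \<xi>) = sqrt ((a - b)\<^sup>2 + (\<epsilon> * a)\<^sup>2)"
    unfolding g_R_def g_eps_def a_def b_def cmod_damped_difference by simp_all
  then show "C_hat \<epsilon> * g_R (\<beta> x) (g x) \<xi> \<le> cmod (g_eps \<epsilon> (\<beta> x) (g x) \<xi>)
         \<and> cmod (g_eps \<epsilon> (\<beta> x) (g x) \<xi>) \<le> C_check \<epsilon> * g_R (\<beta> x) (g x) \<xi>"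
    using damped_difference_lower_bound[OF assms(1) \<open>a \<ge> 0\<close> \<open>b \<ge> 0\<close>]
      damped_difference_upper_bound[OF \<open>a \<ge> 0\<close> \<open>b \<ge> 0\<close>]
    by simp
qed

end
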